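(* Let $a_k=\ln(k\ln^2k)$ for $k\ge3$ (the coupon weights being $a_3,a_4,\dots$). Then $\lim_{N\to\infty}E[U_j^N]=\infty$ for all $j\ge2$.
   Context: For $N\ge3$ there are coupon types $k\in\{3,\dots,N\}$ with probabilities $a_k/\sum_{i=3}^Na_i$; $U_j^N$ is the number of empty album places of the $j$-th collector when the first collector completes her set (each collector passes duplicates to the next one), with $$E[U_j^N]=\sum_{k=3}^N\int_0^\infty a_k e^{-a_k t}\frac{(a_kt)^{j-1}}{(j-1)!}\prod_{i\ne k,\,3\le i\le N}\big(1-e^{-a_i t}\big)\,dt.$$ *)

theory Defs
  imports "HOL-Analysis.Analysis"
begin

definition coupon_a :: "nat \<Rightarrow> real" where
  "coupon_a k = ln (real k * (ln (real k))^2)"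

text \<open>E[U_j^N] as given by the integral formula in the paper, for weights a
  (types k = 3..N).  The integrand is nonnegative, so we use the
  nonnegative (extended-real-valued) Lebesgue integral over [0, infinity).\<close>
definition EU :: "(nat \<Rightarrow> real) \<Rightarrow> nat \<Rightarrow> nat \<Rightarrow> ennreal" where
  "EU a N j = (\<Sum>k\<in>{3..N}. \<integral>\<^sup>+ t \<in> {0..}.
      ennreal (a k * exp (- a k * t) * (a k * t) ^ (j - 1) / fact (j - 1)
        * (\<Prod>i\<in>{3..N} - {k}. 1 - exp (- a i * t))) \<partial>lborel)"

end

theory Submission imports Defs "HOL-Real_Asymp.Real_Asymp" begin

(* For t \<ge> 1 every factor 1 - e^{-a_i t} is at least exp (-2 e^{-a_i t}), and
   \<Sum>_i e^{-a_i t} \<le> \<Sum>_i 1/(i ln\<^sup>2 i) \<le> 1/ln 2 by telescoping, so the product over i \<noteq> k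
   is bounded below by a constant independent of N and k.  Restricting the k-th
   integral to [1, 1 + 1/a_k] then gives a lower bound c_j a_k e^{-a_k} \<ge> c_j/(k ln k),
   and \<Sum>_{k \<le> N} 1/(k ln k) grows like ln ln N. *)

lemma one_le_ln_if_ge_3: "3 \<le> x \<Longrightarrow> 1 \<le> ln (x::real)"
  using exp_le by (subst ln_ge_iff) auto

lemma inverse_mult_ln_squared_le:
  fixes x :: real
  assumes "2 < x"
  shows "1 / (x * (ln x)\<^sup>2) \<le> 1 / ln (x - 1) - 1 / ln x"
proof -
  have ln_pos: "0 < ln (x - 1)" and ln_mono: "ln (x - 1) \<le> ln x"
    using assms by simp_all
  have "ln ((x - 1) / x) \<le> (x - 1) / x - 1"
    using assms by (intro ln_le_minus_one) simp
  also have "(x - 1) / x - 1 = - 1 / x"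
    using assms by (simp add: field_simps)
  finally have inverse_le: "1 / x \<le> ln x - ln (x - 1)"
    using assms by (simp add: ln_div)
  have "1 / (x * (ln x)\<^sup>2) = (1 / x) / (ln x * ln x)"
    by (simp add: power2_eq_square)
  also have "\<dots> \<le> (ln x - ln (x - 1)) / (ln x * ln x)"
    using inverse_le ln_pos ln_mono by (intro divide_right_mono) auto
  also have "\<dots> \<le> (ln x - ln (x - 1)) / (ln (x - 1) * ln x)"
    using inverse_le ln_pos ln_mono by (intro divide_left_mono mult_right_mono mult_pos_pos) auto
  also have "\<dots> = 1 / ln (x - 1) - 1 / ln x"
    using ln_pos ln_mono by (simp add: field_simps)
  finally show ?thesis .
qed

lemma sum_inverse_mult_ln_squared_le:
  "(\<Sum>i=3..N. 1 / (real i * (ln (real i))\<^sup>2)) \<le> 1 / ln 2"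
proof (cases "2 \<le> N")
  case True
  have "(\<Sum>i=3..N. 1 / (real i * (ln (real i))\<^sup>2)) \<le> 1 / ln 2 - 1 / ln (real N)"
    using True
  proof (induction N rule: dec_induct)
    case (step n)
    then show ?case
      using inverse_mult_ln_squared_le[of "real (Suc n)"] by (simp add: sum.cl_ivl_Suc)
  qed simp
  moreover have "0 \<le> 1 / ln (real N)"
    using True by simp
  ultimately show ?thesis
    by linarith
qed simp

lemma ln_ln_succ_diff_le:
  fixes x :: real
  assumes "1 < x"
  shows "ln (ln (x + 1)) - ln (ln x) \<le> 1 / (x * ln x)"
proof -
  have ln_pos: "0 < ln x" and ln_mono: "ln x \<le> ln (x + 1)"
    using assms by simp_all
  have "ln (ln (x + 1)) - ln (ln x) = ln (ln (x + 1) / ln x)"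
    using ln_pos ln_mono by (simp add: ln_div)
  also have "\<dots> \<le> ln (x + 1) / ln x - 1"
    using ln_pos ln_mono by (intro ln_le_minus_one) simp
  also have "\<dots> = ln ((x + 1) / x) / ln x"
    using ln_pos assms by (simp add: ln_div field_simps)
  also have "\<dots> \<le> ((x + 1) / x - 1) / ln x"
    using ln_pos assms by (intro divide_right_mono ln_le_minus_one) auto
  also have "\<dots> = 1 / (x * ln x)"
    using assms by (simp add: field_simps)
  finally show ?thesis .
qed

lemma sum_inverse_mult_ln_ge:
  "2 \<le> N \<Longrightarrow> ln (ln (real N + 1)) - ln (ln 3) \<le> (\<Sum>k=3..N. 1 / (real k * ln (real k)))"
proof (induction N rule: dec_induct)
  case (step n)
  then show ?case
    using ln_ln_succ_diff_le[of "real (Suc n)"] by (simp add: sum.cl_ivl_Suc add.commute)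
qed simp

lemma exp_neg_two_mult_le_one_minus:
  fixes x :: real
  assumes "0 \<le> x" "x \<le> 1/2"
  shows "exp (- 2 * x) \<le> 1 - x"
proof -
  have "x * (2 * x) \<le> x * 1"
    using assms by (intro mult_left_mono) auto
  then have "- 2 * x \<le> - x - 2 * x\<^sup>2"
    by (simp add: power2_eq_square)
  also have "\<dots> \<le> ln (1 - x)"
    using ln_one_minus_pos_lower_bound assms by blast
  finally have "exp (- 2 * x) \<le> exp (ln (1 - x))"
    by simp
  then show ?thesis
    using assms by simp
qed

lemma exp_neg_two_sum_le_prod_one_minus:
  fixes x :: "'a \<Rightarrow> real"
  assumes "finite A" "\<And>i. i \<in> A \<Longrightarrow> 0 \<le> x i \<and> x i \<le> 1/2"
  shows "exp (- 2 * (\<Sum>i\<in>A. x i)) \<le> (\<Prod>i\<in>A. 1 - x i)"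
proof -
  have "exp (- 2 * (\<Sum>i\<in>A. x i)) = (\<Prod>i\<in>A. exp (- 2 * x i))"
    using assms(1) by (simp add: sum_distrib_left exp_sum)
  also have "\<dots> \<le> (\<Prod>i\<in>A. 1 - x i)"
    using assms(2) exp_neg_two_mult_le_one_minus by (intro prod_mono) auto
  finally show ?thesis .
qed

lemma coupon_a_ge_ln: "3 \<le> k \<Longrightarrow> ln (real k) \<le> coupon_a k"
  unfolding coupon_a_def using one_le_ln_if_ge_3[of "real k"] by (simp add: one_le_power)

lemma one_le_coupon_a: "3 \<le> k \<Longrightarrow> 1 \<le> coupon_a k"
  using coupon_a_ge_ln one_le_ln_if_ge_3[of "real k"] by force

lemma exp_neg_coupon_a: "3 \<le> k \<Longrightarrow> exp (- coupon_a k) = 1 / (real k * (ln (real k))\<^sup>2)"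
  unfolding coupon_a_def using one_le_ln_if_ge_3[of "real k"] by (simp add: exp_minus inverse_eq_divide)

lemma coupon_prod_ge:
  assumes "1 \<le> t"
  shows "exp (- 2 / ln 2) \<le> (\<Prod>i\<in>{3..N} - {k}. 1 - exp (- coupon_a i * t))"
proof -
  have exp_le_exp_neg: "exp (- coupon_a i * t) \<le> exp (- coupon_a i)" if "3 \<le> i" for i
    using one_le_coupon_a[OF that] assms by simp
  have exp_le: "exp (- coupon_a i * t) \<le> 1 / (real i * (ln (real i))\<^sup>2)" if "3 \<le> i" for i
    using exp_le_exp_neg[OF that] exp_neg_coupon_a[OF that] by simp
  have "exp (- coupon_a i * t) \<le> 1/2" if "3 \<le> i" for i
  proof -
    have "exp (- coupon_a i * t) \<le> exp (-1)"
      using exp_le_exp_neg[OF that] one_le_coupon_a[OF that] by (simp add: order_trans)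
    also have "exp (-1) \<le> (1/2 :: real)"
      using exp_ge_add_one_self[of 1] by (simp add: exp_minus field_simps)
    finally show ?thesis .
  qed
  then have prod_ge: "exp (- 2 * (\<Sum>i\<in>{3..N} - {k}. exp (- coupon_a i * t)))
      \<le> (\<Prod>i\<in>{3..N} - {k}. 1 - exp (- coupon_a i * t))"
    by (intro exp_neg_two_sum_le_prod_one_minus) auto
  have "(\<Sum>i\<in>{3..N} - {k}. exp (- coupon_a i * t)) \<le> (\<Sum>i=3..N. exp (- coupon_a i * t))"
    by (intro sum_mono2) auto
  also have "\<dots> \<le> (\<Sum>i=3..N. 1 / (real i * (ln (real i))\<^sup>2))"
    using exp_le by (intro sum_mono) auto
  also have "\<dots> \<le> 1 / ln 2"
    by (rule sum_inverse_mult_ln_squared_le)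
  finally have "exp (- 2 / ln 2) \<le> exp (- 2 * (\<Sum>i\<in>{3..N} - {k}. exp (- coupon_a i * t)))"
    by simp
  then show ?thesis
    using prod_ge by (rule order_trans)
qed

lemma nn_integral_ge_interval:
  fixes f :: "real \<Rightarrow> real"
  assumes "0 \<le> u" "u \<le> v" "0 \<le> L" "\<And>t. t \<in> {u..v} \<Longrightarrow> L \<le> f t"
  shows "ennreal (L * (v - u)) \<le> (\<integral>\<^sup>+ t \<in> {0..}. ennreal (f t) \<partial>lborel)"
proof -
  have "ennreal (L * (v - u)) = ennreal L * emeasure lborel {u..v}"
    using assms by (simp add: ennreal_mult)
  also have "\<dots> = (\<integral>\<^sup>+ t \<in> {u..v}. ennreal L \<partial>lborel)"
    by (simp add: nn_integral_cmult_indicator)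
  also have "\<dots> \<le> (\<integral>\<^sup>+ t \<in> {0..}. ennreal (f t) \<partial>lborel)"
    using assms by (intro nn_integral_mono) (auto simp: indicator_def ennreal_leI)
  finally show ?thesis .
qed

lemma gamma_kernel_ge:
  fixes a t :: real
  assumes "1 \<le> a" "1 \<le> t" "t \<le> 1 + 1/a" "2 \<le> j"
  shows "a\<^sup>2 * exp (- a - 1) \<le> a * exp (- a * t) * (a * t) ^ (j - 1)"
proof -
  have "a * t \<le> a + 1"
    using assms mult_left_mono[OF assms(3), of a] by (simp add: distrib_left)
  then have exp_ge: "exp (- a - 1) \<le> exp (- a * t)"
    by simp
  have "a \<le> a * t"
    using assms by simp
  also have "a * t \<le> (a * t) ^ (j - 1)"
    using assms \<open>a \<le> a * t\<close> by (intro self_le_power) linarith+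
  finally have "exp (- a - 1) * a \<le> exp (- a * t) * (a * t) ^ (j - 1)"
    using exp_ge assms by (intro mult_mono) auto
  then have "a * (exp (- a - 1) * a) \<le> a * (exp (- a * t) * (a * t) ^ (j - 1))"
    using assms by (intro mult_left_mono) auto
  then show ?thesis
    by (simp add: power2_eq_square algebra_simps)
qed

definition coupon_c :: "nat \<Rightarrow> real" where
  "coupon_c j = exp (- 2 / ln 2 - 1) / fact (j - 1)"

lemma coupon_c_pos: "0 < coupon_c j"
  by (simp add: coupon_c_def)

lemma coupon_integral_ge:
  assumes k: "3 \<le> k" and j: "2 \<le> j"
  shows "ennreal (coupon_c j / (real k * ln (real k)))
    \<le> (\<integral>\<^sup>+ t \<in> {0..}. ennreal (coupon_a k * exp (- coupon_a k * t) * (coupon_a k * t) ^ (j - 1)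
          / fact (j - 1) * (\<Prod>i\<in>{3..N} - {k}. 1 - exp (- coupon_a i * t))) \<partial>lborel)"
    (is "ennreal ?lower \<le> (\<integral>\<^sup>+ t \<in> {0..}. ennreal (?f t) \<partial>lborel)")
proof -
  define a where "a = coupon_a k"
  have a: "1 \<le> a"
    unfolding a_def using one_le_coupon_a[OF k] .
  have ln_k: "1 \<le> ln (real k)"
    using one_le_ln_if_ge_3 k by simp
  define L where "L = coupon_c j * a\<^sup>2 * exp (- a)"
  have "L \<le> ?f t" if "t \<in> {1..1 + 1/a}" for t
  proof -
    have "L = a\<^sup>2 * exp (- a - 1) / fact (j - 1) * exp (- 2 / ln 2)"
      unfolding L_def coupon_c_def exp_diff by (simp add: exp_minus field_simps)
    also have "\<dots> \<le> a * exp (- a * t) * (a * t) ^ (j - 1) / fact (j - 1)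
        * (\<Prod>i\<in>{3..N} - {k}. 1 - exp (- coupon_a i * t))"
      using that a
      by (intro mult_mono divide_right_mono gamma_kernel_ge coupon_prod_ge j) auto
    also have "\<dots> = ?f t"
      unfolding a_def ..
    finally show ?thesis .
  qed
  moreover have "0 \<le> L"
    unfolding L_def using coupon_c_pos[of j] by simp
  ultimately have "ennreal (L * (1 + 1/a - 1)) \<le> (\<integral>\<^sup>+ t \<in> {0..}. ennreal (?f t) \<partial>lborel)"
    using a by (intro nn_integral_ge_interval) auto
  moreover have "?lower \<le> L * (1 + 1/a - 1)"
  proof -
    have "1 / (real k * ln (real k)) = ln (real k) / (real k * (ln (real k))\<^sup>2)"
      using ln_k by (simp add: power2_eq_square)
    also have "\<dots> \<le> a / (real k * (ln (real k))\<^sup>2)"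
      using coupon_a_ge_ln[OF k] by (intro divide_right_mono) (auto simp: a_def)
    finally have frac_le: "1 / (real k * ln (real k)) \<le> a / (real k * (ln (real k))\<^sup>2)" .
    have "?lower = coupon_c j * (1 / (real k * ln (real k)))"
      by simp
    also have "\<dots> \<le> coupon_c j * (a / (real k * (ln (real k))\<^sup>2))"
      using frac_le coupon_c_pos[of j] by (intro mult_left_mono) auto
    also have "\<dots> = L * (1 + 1/a - 1)"
      unfolding L_def using exp_neg_coupon_a[OF k] a
      by (simp add: a_def power2_eq_square)
    finally show ?thesis .
  qed
  ultimately show ?thesis
    by (meson ennreal_leI order_trans)
qed

lemma EU_coupon_ge_ln_ln:
  assumes "3 \<le> N" "2 \<le> j"
  shows "ennreal (coupon_c j * (ln (ln (real N + 1)) - ln (ln 3))) \<le> EU coupon_a N j"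
proof -
  have "coupon_c j * (ln (ln (real N + 1)) - ln (ln 3))
      \<le> coupon_c j * (\<Sum>k=3..N. 1 / (real k * ln (real k)))"
    using sum_inverse_mult_ln_ge[of N] assms coupon_c_pos[of j] by (intro mult_left_mono) auto
  also have "\<dots> = (\<Sum>k=3..N. coupon_c j / (real k * ln (real k)))"
    by (simp add: sum_distrib_left)
  finally have "ennreal (coupon_c j * (ln (ln (real N + 1)) - ln (ln 3)))
      \<le> ennreal (\<Sum>k=3..N. coupon_c j / (real k * ln (real k)))"
    by (rule ennreal_leI)
  also have "\<dots> = (\<Sum>k=3..N. ennreal (coupon_c j / (real k * ln (real k))))"
    using coupon_c_pos[of j] by (intro sum_ennreal[symmetric]) (auto simp: less_imp_le)
  also have "\<dots> \<le> EU coupon_a N j"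
    unfolding EU_def using assms by (intro sum_mono coupon_integral_ge) auto
  finally show ?thesis .
qed

theorem mainTheorem14:
  fixes j :: nat
  assumes "j \<ge> 2"
  shows "((\<lambda>N. EU coupon_a N j) \<longlongrightarrow> \<infinity>) sequentially"
proof -
  let ?lower = "\<lambda>N::nat. coupon_c j * (ln (ln (real N + 1)) - ln (ln 3))"
  have "filterlim (\<lambda>N::nat. ln (ln (real N + 1)) - ln (ln 3)) at_top sequentially"
    by real_asymp
  then have "filterlim ?lower at_top sequentially"
    using coupon_c_pos by (intro filterlim_tendsto_pos_mult_at_top) auto
  then have lim: "((\<lambda>N. ennreal (?lower N)) \<longlongrightarrow> \<infinity>) sequentially"
    by (simp add: ennreal_tendsto_top_eq_at_top)
  have ev_lower: "eventually (\<lambda>N. ennreal (?lower N) \<le> EU coupon_a N j) sequentially"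
    using eventually_ge_at_top[of 3] by (rule eventually_mono) (rule EU_coupon_ge_ln_ln[OF _ assms])
  have ev_upper: "eventually (\<lambda>N. EU coupon_a N j \<le> \<infinity>) sequentially"
    by (rule always_eventually) simp
  show ?thesis
    by (rule tendsto_sandwich[OF ev_lower ev_upper lim tendsto_const])
qed

end
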